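(* Let $k=\mathbb{F}_q$ with $q$ odd, $q>3$, let $n\ge1$, $A=M_{2n}(k)$, $J_{2n}=\begin{pmatrix}0&I_n\\-I_n&0\end{pmatrix}$, and $a^{\sim}=J_{2n}a^{t}J_{2n}^{-1}$ for $a\in A$. Let $V=k^{2n}$ (row vectors, with $A$ acting on the right), and let $[x,y]=\langle x,yJ_{2n}\rangle$ where $\langle\cdot,\cdot\rangle$ is the standard dot product. For every $u\in A^{\times}$ with $u^{\sim}=u$, the map $Q_u:V^2\to k$, $Q_u((x,y))=[xu,y]$, is a nondegenerate split quadratic form on the $4n$-dimensional $k$-vector space $V^2$. Moreover, for any two such $u,u'\in A^{\times}$ with $u^{\sim}=u$, $u'^{\sim}=u'$, the quadratic forms $Q_u$ and $Q_{u'}$ are equivalent.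
   Context: A quadratic form on a finite-dimensional vector space over a field of odd characteristic is nondegenerate if its associated symmetric bilinear form is nondegenerate, and split if it is equivalent to an orthogonal sum of hyperbolic planes. Two quadratic forms $Q,Q'$ on $V^2$ are equivalent if $Q'=Q\circ g$ for some linear automorphism $g$. *)

theory Defs
  imports "HOL-Analysis.Analysis"
begin

text \<open>The index type of \<open>k^(2n)\<close> is \<open>'n + 'n\<close>; the first block \<open>Inl\<close>, the second \<open>Inr\<close>.\<close>

definition Jmat :: "('k::ring_1) ^ ('n::finite + 'n) ^ ('n + 'n)" where
  "Jmat = (\<chi> i j. case (i, j) of
             (Inl a, Inr b) \<Rightarrow> (if a = b then 1 else 0)
           | (Inr a, Inl b) \<Rightarrow> (if a = b then -1 else 0)
           | _ \<Rightarrow> 0)"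

definition tilde :: "('k::field) ^ ('n::finite + 'n) ^ ('n + 'n) \<Rightarrow> 'k ^ ('n + 'n) ^ ('n + 'n)" where
  "tilde a = Jmat ** transpose a ** matrix_inv Jmat"

definition dotp :: "('k::comm_ring_1) ^ 'm::finite \<Rightarrow> 'k ^ 'm \<Rightarrow> 'k" where
  "dotp x y = (\<Sum>i\<in>UNIV. x $ i * y $ i)"

definition sympl :: "('k::comm_ring_1) ^ ('n::finite + 'n) \<Rightarrow> 'k ^ ('n + 'n) \<Rightarrow> 'k" where
  "sympl x y = dotp x (y v* Jmat)"

definition Qu :: "('k::comm_ring_1) ^ ('n::finite + 'n) ^ ('n + 'n) \<Rightarrow> (('k ^ ('n + 'n)) \<times> ('k ^ ('n + 'n))) \<Rightarrow> 'k" where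
  "Qu u v = sympl (fst v v* u) (snd v)"

definition padd :: "(('k::ab_group_add) ^ 'm::finite) \<times> ('k ^ 'm) \<Rightarrow> ('k ^ 'm) \<times> ('k ^ 'm) \<Rightarrow> ('k ^ 'm) \<times> ('k ^ 'm)" where
  "padd v w = (fst v + fst w, snd v + snd w)"

definition psmul :: "('k::ring_1) \<Rightarrow> ('k ^ 'm::finite) \<times> ('k ^ 'm) \<Rightarrow> ('k ^ 'm) \<times> ('k ^ 'm)" where
  "psmul c v = (c *s fst v, c *s snd v)"

definition plinear :: "((('k::ring_1) ^ 'm::finite) \<times> ('k ^ 'm) \<Rightarrow> ('k ^ 'm) \<times> ('k ^ 'm)) \<Rightarrow> bool" where
  "plinear g \<longleftrightarrow> (\<forall>v w. g (padd v w) = padd (g v) (g w)) \<and> (\<forall>c v. g (psmul c v) = psmul c (g v))"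

definition plin_aut :: "((('k::ring_1) ^ 'm::finite) \<times> ('k ^ 'm) \<Rightarrow> ('k ^ 'm) \<times> ('k ^ 'm)) \<Rightarrow> bool" where
  "plin_aut g \<longleftrightarrow> plinear g \<and> bij g"

definition polar :: "((('k::ring_1) ^ 'm::finite) \<times> ('k ^ 'm) \<Rightarrow> 'k) \<Rightarrow> ('k ^ 'm) \<times> ('k ^ 'm) \<Rightarrow> ('k ^ 'm) \<times> ('k ^ 'm) \<Rightarrow> 'k" where
  "polar Q v w = Q (padd v w) - Q v - Q w"

definition quadratic_form :: "((('k::field) ^ 'm::finite) \<times> ('k ^ 'm) \<Rightarrow> 'k) \<Rightarrow> bool" where
  "quadratic_form Q \<longleftrightarrow>
     (\<forall>c v. Q (psmul c v) = c ^ 2 * Q v) \<and>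
     (\<forall>u v w. polar Q (padd u v) w = polar Q u w + polar Q v w) \<and>
     (\<forall>c v w. polar Q (psmul c v) w = c * polar Q v w)"

definition nondegenerate :: "((('k::field) ^ 'm::finite) \<times> ('k ^ 'm) \<Rightarrow> 'k) \<Rightarrow> bool" where
  "nondegenerate Q \<longleftrightarrow> (\<forall>v. (\<forall>w. polar Q v w = 0) \<longrightarrow> v = (0, 0))"

definition equivalent_qf :: "((('k::field) ^ 'm::finite) \<times> ('k ^ 'm) \<Rightarrow> 'k) \<Rightarrow> (('k ^ 'm) \<times> ('k ^ 'm) \<Rightarrow> 'k) \<Rightarrow> bool" where
  "equivalent_qf Q Q' \<longleftrightarrow> (\<exists>g. plin_aut g \<and> Q' = Q \<circ> g)"

text \<open>The orthogonal sum of hyperbolic planes \<open>span(e_i, f_i)\<close>, \<open>i \<in> 'm\<close>, on \<open>k^m \<times> k^m\<close>: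
  \<open>H(a, b) = \<Sum>_i a_i b_i\<close>.\<close>
definition hyperbolic_sum :: "(('k::comm_ring_1) ^ 'm::finite) \<times> ('k ^ 'm) \<Rightarrow> 'k" where
  "hyperbolic_sum v = (\<Sum>i\<in>UNIV. fst v $ i * snd v $ i)"

definition split_qf :: "((('k::field) ^ 'm::finite) \<times> ('k ^ 'm) \<Rightarrow> 'k) \<Rightarrow> bool" where
  "split_qf Q \<longleftrightarrow> equivalent_qf Q hyperbolic_sum"

end

theory Submission
  imports Defs
begin

text \<open>
  For invertible \<open>u\<close> the change of variables \<open>(a, b) \<mapsto> (a u\<^sup>-\<^sup>1, b J\<^sup>t)\<close> turns
  \<open>Q\<^sub>u(x, y) = \<langle>x u, y J\<rangle>\<close> into \<open>\<Sum>\<^sub>i a\<^sub>i b\<^sub>i\<close>, because \<open>J\<close> is orthogonal. So every \<open>Q\<^sub>u\<close> is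
  split; split forms are nondegenerate, and any two of them are equivalent via the
  hyperbolic form.
\<close>

lemma sum_UNIV_Plus:
  "(\<Sum>i\<in>UNIV. f i) = (\<Sum>a\<in>UNIV. f (Inl a)) + (\<Sum>b\<in>UNIV. f (Inr b))"
  for f :: "'a::finite + 'b::finite \<Rightarrow> 'c::comm_monoid_add"
  using sum.Plus[of "UNIV :: 'a set" "UNIV :: 'b set" f] by (simp add: comp_def)

lemma transpose_Jmat_mult_Jmat:
  "transpose Jmat ** Jmat = (mat 1 :: 'k::ring_1 ^ ('n::finite + 'n) ^ ('n + 'n))"
  unfolding vec_eq_iff
  by (intro allI, case_tac i; case_tac ia)
    (simp_all add: matrix_matrix_mult_def transpose_def Jmat_def mat_def sum_UNIV_Plus
      if_distrib if_distribR cong: if_cong)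

lemma Jmat_mult_transpose_Jmat:
  "Jmat ** transpose Jmat = (mat 1 :: 'k::ring_1 ^ ('n::finite + 'n) ^ ('n + 'n))"
  unfolding vec_eq_iff
  by (intro allI, case_tac i; case_tac ia)
    (simp_all add: matrix_matrix_mult_def transpose_def Jmat_def mat_def sum_UNIV_Plus
      if_distrib if_distribR cong: if_cong)

lemma dotp_add_left: "dotp (x + y) z = dotp x z + dotp y z"
  by (simp add: dotp_def distrib_right sum.distrib)

lemma dotp_add_right: "dotp x (y + z) = dotp x y + dotp x z"
  by (simp add: dotp_def distrib_left sum.distrib)

lemma dotp_scale_left: "dotp (c *s x) y = c * dotp x y"
  by (simp add: dotp_def sum_distrib_left mult.assoc)

lemma dotp_scale_right: "dotp x (c *s y) = c * dotp x y"
  by (simp add: dotp_def sum_distrib_left mult_ac)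

lemma dotp_axis_left: "dotp (axis j 1) x = x $ j"
  by (simp add: dotp_def axis_def if_distrib if_distribR cong: if_cong)

lemma dotp_axis_right: "dotp x (axis j 1) = x $ j"
  by (simp add: dotp_def axis_def if_distrib if_distribR cong: if_cong)

lemma dotp_zero_left [simp]: "dotp 0 x = 0"
  by (simp add: dotp_def)

lemma dotp_zero_right [simp]: "dotp x 0 = 0"
  by (simp add: dotp_def)

lemma Qu_pair: "Qu u (x, y) = dotp (x v* u) (y v* Jmat)"
  by (simp add: Qu_def sympl_def)

lemma polar_Qu:
  "polar (Qu u) (x, y) (x', y') = dotp (x v* u) (y' v* Jmat) + dotp (x' v* u) (y v* Jmat)"
  by (simp add: polar_def Qu_pair padd_def vector_matrix_left_distrib dotp_add_left
      dotp_add_right algebra_simps)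

lemma quadratic_form_Qu: "quadratic_form (Qu (u :: 'k::field ^ ('n::finite + 'n) ^ ('n + 'n)))"
  unfolding quadratic_form_def psmul_def padd_def split_paired_all
  by (simp add: polar_Qu Qu_pair vector_matrix_left_distrib scalar_vector_matrix_assoc
      dotp_add_left dotp_add_right dotp_scale_left dotp_scale_right algebra_simps power2_eq_square)

lemma polar_hyperbolic_sum:
  "polar hyperbolic_sum (x, y) (x', y') = dotp x y' + dotp x' y"
  by (simp add: polar_def hyperbolic_sum_def padd_def dotp_def algebra_simps sum.distrib)

lemma nondegenerate_hyperbolic_sum:
  "nondegenerate (hyperbolic_sum :: ('k::field ^ 'm::finite) \<times> ('k ^ 'm) \<Rightarrow> 'k)"
  unfolding nondegenerate_def split_paired_all split_paired_All
proof (intro allI impI)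
  fix x y :: "'k ^ 'm"
  assume orth: "\<forall>x' y'. polar hyperbolic_sum (x, y) (x', y') = 0"
  have "x $ j = 0" for j
    using orth[rule_format, of 0 "axis j 1"] by (simp add: polar_hyperbolic_sum dotp_axis_right)
  moreover have "y $ j = 0" for j
    using orth[rule_format, of "axis j 1" 0] by (simp add: polar_hyperbolic_sum dotp_axis_left)
  ultimately show "(x, y) = (0, 0)"
    by (simp add: vec_eq_iff)
qed

lemma plinear_zero: "plinear g \<Longrightarrow> g (0, 0) = (0, 0)"
  unfolding plinear_def psmul_def
  by (metis fst_conv snd_conv vector_smult_lzero)

lemma polar_comp: "plinear g \<Longrightarrow> polar (Q \<circ> g) v w = polar Q (g v) (g w)"
  by (simp add: polar_def plinear_def del: split_paired_All)

lemma plin_aut_comp: "plin_aut g \<Longrightarrow> plin_aut h \<Longrightarrow> plin_aut (g \<circ> h)"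
  by (simp add: plin_aut_def plinear_def bij_comp del: split_paired_All)

lemma plin_aut_inv: "plin_aut g \<Longrightarrow> plin_aut (inv g)"
  unfolding plin_aut_def plinear_def
  by (metis bij_betw_inv_into bij_inv_eq_iff)

lemma plin_aut_map_prod_vector_matrix:
  fixes A B :: "'k::field ^ 'm::finite ^ 'm"
  assumes "invertible A" and "invertible B"
  shows "plin_aut (map_prod (\<lambda>x. x v* A) (\<lambda>y. y v* B))"
proof -
  obtain A' B' where inv: "A ** A' = mat 1" "A' ** A = mat 1" "B ** B' = mat 1" "B' ** B = mat 1"
    using assms unfolding invertible_def by blast
  have "bij (map_prod (\<lambda>x. x v* A) (\<lambda>y. y v* B))"
  proof (rule o_bij)
    show "map_prod (\<lambda>x. x v* A') (\<lambda>y. y v* B') \<circ> map_prod (\<lambda>x. x v* A) (\<lambda>y. y v* B) = id"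
      by (simp add: fun_eq_iff map_prod_def vector_matrix_mul_assoc inv split: prod.split)
    show "map_prod (\<lambda>x. x v* A) (\<lambda>y. y v* B) \<circ> map_prod (\<lambda>x. x v* A') (\<lambda>y. y v* B') = id"
      by (simp add: fun_eq_iff map_prod_def vector_matrix_mul_assoc inv split: prod.split)
  qed
  then show ?thesis
    by (simp add: plin_aut_def plinear_def padd_def psmul_def vector_matrix_left_distrib
        scalar_vector_matrix_assoc)
qed

lemma equivalent_qf_sym:
  assumes "equivalent_qf Q Q'"
  shows "equivalent_qf Q' Q"
proof -
  obtain g where g: "plin_aut g" "Q' = Q \<circ> g"
    using assms unfolding equivalent_qf_def by blast
  then have "Q = Q' \<circ> inv g"
    by (metis comp_assoc comp_id bij_is_surj surj_iff plin_aut_def)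
  with g(1) show ?thesis
    unfolding equivalent_qf_def using plin_aut_inv by blast
qed

lemma equivalent_qf_trans: "equivalent_qf Q Q' \<Longrightarrow> equivalent_qf Q' Q'' \<Longrightarrow> equivalent_qf Q Q''"
  unfolding equivalent_qf_def
  by (metis comp_assoc plin_aut_comp)

lemma nondegenerate_comp:
  assumes "plin_aut g" and "nondegenerate Q"
  shows "nondegenerate (Q \<circ> g)"
  unfolding nondegenerate_def
proof (intro allI impI)
  fix v
  assume "\<forall>w. polar (Q \<circ> g) v w = 0"
  then have "\<forall>w. polar Q (g v) (g w) = 0"
    using assms(1) by (simp add: polar_comp plin_aut_def)
  then have "\<forall>w. polar Q (g v) w = 0"
    using assms(1) unfolding plin_aut_def by (metis bij_is_surj surj_f_inv_f)
  then have "g v = (0, 0)"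
    using assms(2) unfolding nondegenerate_def by blast
  then have "g v = g (0, 0)"
    using assms(1) by (simp add: plin_aut_def plinear_zero)
  then show "v = (0, 0)"
    using assms(1) by (simp add: plin_aut_def bij_is_inj inj_eq)
qed

lemma nondegenerate_if_split_qf: "split_qf Q \<Longrightarrow> nondegenerate Q"
  unfolding split_qf_def
  by (metis equivalent_qf_def equivalent_qf_sym nondegenerate_comp nondegenerate_hyperbolic_sum)

lemma equivalent_qf_if_split_qf: "split_qf Q \<Longrightarrow> split_qf Q' \<Longrightarrow> equivalent_qf Q Q'"
  unfolding split_qf_def
  using equivalent_qf_sym equivalent_qf_trans by blast

lemma split_qf_Qu:
  fixes u :: "'k::field ^ ('n::finite + 'n) ^ ('n + 'n)"
  assumes "invertible u"
  shows "split_qf (Qu u)"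
proof -
  obtain w where uw: "u ** w = mat 1" "w ** u = mat 1"
    using assms unfolding invertible_def by blast
  let ?g = "map_prod (\<lambda>x. x v* w) (\<lambda>y. y v* transpose Jmat)"
  have "invertible (transpose Jmat :: 'k ^ ('n + 'n) ^ ('n + 'n))"
    using Jmat_mult_transpose_Jmat transpose_Jmat_mult_Jmat invertible_def by blast
  then have "plin_aut ?g"
    using uw invertible_def plin_aut_map_prod_vector_matrix by blast
  moreover have "hyperbolic_sum = Qu u \<circ> ?g"
    by (simp add: fun_eq_iff Qu_pair vector_matrix_mul_assoc uw transpose_Jmat_mult_Jmat
        hyperbolic_sum_def dotp_def del: vector_transpose_matrix)
  ultimately show ?thesis
    unfolding split_qf_def equivalent_qf_def by blast
qed

theorem mainTheorem3:
  fixes u u' :: "('k::{field, finite}) ^ ('n::finite + 'n) ^ ('n + 'n)"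
  assumes "odd CARD('k)" and "CARD('k) > 3"
  shows "(invertible u \<and> tilde u = u \<longrightarrow>
            quadratic_form (Qu u) \<and> nondegenerate (Qu u) \<and> split_qf (Qu u))
       \<and> (invertible u \<and> tilde u = u \<and> invertible u' \<and> tilde u' = u' \<longrightarrow>
            equivalent_qf (Qu u) (Qu u'))"
  using quadratic_form_Qu split_qf_Qu nondegenerate_if_split_qf equivalent_qf_if_split_qf by blast

end
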